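(* Let $f_1 \in \mathcal{F}_{\mu_1,L_1}(\mathbb{R}^d)$ and $f_2 \in \mathcal{F}_{\mu_2,L_2}(\mathbb{R}^d)$ with $\mu_1\in[0,\infty)$, $\mu_2\in\mathbb{R}$, such that $F=f_1-f_2$ is bounded below with $F_{lo}:=\inf F$, $\emptyset\ne\operatorname{dom}\partial f_1\subseteq\operatorname{dom}\partial f_2$ and $\operatorname{range}\partial f_2\subseteq\operatorname{range}\partial f_1$. Assume exactly one of $f_1,f_2$ is smooth (exactly one of $L_1, L_2$ is $\infty$), and $\mu_1+\mu_2>0$ or $\mu_1=\mu_2=0$. Run $N\ge1$ DCA iterations from $x^0$: for $k=0,\dots,N-1$ select $g_2^k\in\partial f_2(x^k)$, $x^{k+1}\in\operatorname{argmin}_w\{f_1(w)-\langle g_2^k,w\rangle\}$, $g_1^{k+1}:=g_2^k\in\partial f_1(x^{k+1})$; $g_1^0\in\partial f_1(x^0)$, $g_2^N\in\partial f_2(x^N)$ arbitrary. If the parameters lie in one of the domains below, with $p := \sigma+\sigma^+$, then $$\tfrac12\min_{0\le k\le N}\|g_1^k-g_2^k\|^2\le\frac{F(x^0)-F(x^N)}{pN},$$ and if moreover $L_1>\mu_2$, $\tfrac12\min_{0\le k\le N}\|g_1^k-g_2^k\|^2\le\frac{F(x^0)-F_{lo}}{pN+\frac{1}{L_1-\mu_2}}$. Domains and values: (a) $L_1=\infty>L_2\ge\mu_1\ge0$ and $\mu_2(\mu_1^{-1}+\mu_2^{-1}+L_2^{-1})\ge0$: $\sigma=0$, $\sigma^+=\frac{L_2+\mu_1}{L_2^2}$.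 (b) $L_2=\infty>L_1\ge\mu_2\ge0$ and $\mu_1(\mu_1^{-1}+\mu_2^{-1}+L_1^{-1})\ge0$: $\sigma=\frac{L_1+\mu_2}{L_1^2}$, $\sigma^+=0$. (c) $L_2=\infty$ and $\mu_1>-\mu_2>0$: $\sigma=\frac{L_1^{-1}(\mu_1^{-1}+\mu_2^{-1})}{\mu_1^{-1}+\mu_2^{-1}-L_1^{-1}}$, $\sigma^+=0$. (d) $L_1=\infty$, $\mu_1>-\mu_2>0$ and $\mu_1^{-1}+\mu_2^{-1}+L_2^{-1}>0$: $\sigma=0$, $\sigma^+=\frac{\mu_1+\mu_2}{\mu_2^2}$.
   Context: For $\mu\in\mathbb{R}$ and $L\in(\mu,\infty]$, $\mathcal{F}_{\mu,L}(\mathbb{R}^d)$ is the class of proper lower semicontinuous $f:\mathbb{R}^d\to\mathbb{R}$ with $f-\frac{\mu}{2}\|\cdot\|^2$ convex and, if $L<\infty$, $\frac{L}{2}\|\cdot\|^2-f$ convex ($L$ may be nonpositive; $L=\infty$ means no upper curvature condition, i.e. possibly nonsmooth). Subdifferential: $\partial f(x)=\{g+\mu x: g\in\partial(f-\frac{\mu}{2}\|\cdot\|^2)(x)\}$, equal to $\{\nabla f(x)\}$ where differentiable. $\operatorname{dom}\partial f=\{x:\partial f(x)\neq\emptyset\}$, $\operatorname{range}\partial f=\bigcup_x\partial f(x)$. Convention: $1/\infty=0$. *)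

theory Defs
  imports "HOL-Analysis.Analysis"
begin

definition lsc :: "('a::topological_space \<Rightarrow> real) \<Rightarrow> bool" where
  "lsc f \<longleftrightarrow> (\<forall>t. closed {x. f x \<le> t})"

definition FmuL :: "real \<Rightarrow> ereal \<Rightarrow> ('a::euclidean_space \<Rightarrow> real) set" where
  "FmuL \<mu> L = {f. lsc f
      \<and> convex_on UNIV (\<lambda>x. f x - \<mu> / 2 * (norm x)\<^sup>2)
      \<and> (L \<noteq> \<infinity> \<longrightarrow> convex_on UNIV (\<lambda>x. real_of_ereal L / 2 * (norm x)\<^sup>2 - f x))}"

definition subdiff :: "real \<Rightarrow> ('a::euclidean_space \<Rightarrow> real) \<Rightarrow> 'a \<Rightarrow> 'a set" where
  "subdiff \<mu> f x = {g + \<mu> *\<^sub>R x | g.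
      \<forall>y. f y - \<mu> / 2 * (norm y)\<^sup>2 \<ge> f x - \<mu> / 2 * (norm x)\<^sup>2 + g \<bullet> (y - x)}"

definition dom_subdiff :: "real \<Rightarrow> ('a::euclidean_space \<Rightarrow> real) \<Rightarrow> 'a set" where
  "dom_subdiff \<mu> f = {x. subdiff \<mu> f x \<noteq> {}}"

definition range_subdiff :: "real \<Rightarrow> ('a::euclidean_space \<Rightarrow> real) \<Rightarrow> 'a set" where
  "range_subdiff \<mu> f = (\<Union>x. subdiff \<mu> f x)"

text \<open>Inverses are taken in ereal, where inverse 0 = \<infinity> and
  inverse \<infinity> = 0 (so 1/\<infinity> = 0 as in the paper), and 0 * \<infinity> = 0.\<close>
definition dca_domain :: "real \<Rightarrow> real \<Rightarrow> ereal \<Rightarrow> ereal \<Rightarrow> real \<Rightarrow> real \<Rightarrow> bool" where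
  "dca_domain \<mu>1 \<mu>2 L1 L2 \<sigma> \<sigma>p \<longleftrightarrow>
     \<comment> \<open>(a)\<close>
     (L1 = \<infinity> \<and> L2 < \<infinity> \<and> L2 \<ge> ereal \<mu>1 \<and> \<mu>1 \<ge> 0
        \<and> ereal \<mu>2 * (inverse (ereal \<mu>1) + inverse (ereal \<mu>2) + inverse L2) \<ge> 0
        \<and> \<sigma> = 0 \<and> \<sigma>p = (real_of_ereal L2 + \<mu>1) / (real_of_ereal L2)\<^sup>2)
   \<or> \<comment> \<open>(b)\<close>
     (L2 = \<infinity> \<and> L1 < \<infinity> \<and> L1 \<ge> ereal \<mu>2 \<and> \<mu>2 \<ge> 0
        \<and> ereal \<mu>1 * (inverse (ereal \<mu>1) + inverse (ereal \<mu>2) + inverse L1) \<ge> 0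
        \<and> \<sigma> = (real_of_ereal L1 + \<mu>2) / (real_of_ereal L1)\<^sup>2 \<and> \<sigma>p = 0)
   \<or> \<comment> \<open>(c)\<close>
     (L2 = \<infinity> \<and> \<mu>1 > - \<mu>2 \<and> - \<mu>2 > 0
        \<and> \<sigma> = (inverse (real_of_ereal L1) * (inverse \<mu>1 + inverse \<mu>2))
               / (inverse \<mu>1 + inverse \<mu>2 - inverse (real_of_ereal L1))
        \<and> \<sigma>p = 0)
   \<or> \<comment> \<open>(d)\<close>
     (L1 = \<infinity> \<and> \<mu>1 > - \<mu>2 \<and> - \<mu>2 > 0
        \<and> ereal (inverse \<mu>1) + ereal (inverse \<mu>2) + inverse L2 > 0
        \<and> \<sigma> = 0 \<and> \<sigma>p = (\<mu>1 + \<mu>2) / \<mu>2\<^sup>2)"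

end

theory Submission
  imports Defs
begin

(* Write F = f1 - f2. In the step x \<mapsto> x' of the iteration, g = g2(x) = g1(x') is a subgradient
   of f2 at x and of f1 at x'. Adding the subgradient inequality of the nonsmooth function to 1 + \<beta>
   and \<beta> times the two interpolation inequalities of the smooth one between x and x' shows that F
   decreases by at least \<sigma>/2 |g1(x) - g|^2 + \<sigma>p/2 |g - g2(x')|^2: what is left over is a quadratic
   form in x' - x and the gradient difference of the smooth function which, in each parameter domain,
   is a nonnegative multiple of a square. Telescoping over the N steps bounds N (\<sigma> + \<sigma>p) times the
   smallest gap. For the second bound, one more gradient step of length 1/(L1 - \<mu>2) from x^N
   decreases F by the last gap divided by L1 - \<mu>2, and F stays above its infimum. *)

section \<open>Subgradient inequalities in FmuL\<close>

lemma power2_norm_add_scaleR: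
  fixes x d :: "'a::real_inner"
  shows "(norm (x + t *\<^sub>R d))\<^sup>2 = (norm x)\<^sup>2 + 2 * t * (x \<bullet> d) + t\<^sup>2 * (norm d)\<^sup>2"
  unfolding power2_norm_eq_inner
  by (simp add: inner_add_left inner_add_right inner_commute power2_eq_square algebra_simps)

lemma power2_norm_diff_scaleR:
  fixes x d :: "'a::real_inner"
  shows "(norm (x - t *\<^sub>R d))\<^sup>2 = (norm x)\<^sup>2 - 2 * t * (x \<bullet> d) + t\<^sup>2 * (norm d)\<^sup>2"
  using power2_norm_add_scaleR[of x "- t" d] by simp

lemma mem_subdiff_iff_convex_part:
  "g \<in> subdiff \<mu> f x \<longleftrightarrow>
     (\<forall>y. f x - \<mu> / 2 * (norm x)\<^sup>2 + (g - \<mu> *\<^sub>R x) \<bullet> (y - x) \<le> f y - \<mu> / 2 * (norm y)\<^sup>2)"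
  unfolding subdiff_def by (auto intro!: exI[of _ "g - \<mu> *\<^sub>R x"])

lemma mem_subdiff_iff:
  "g \<in> subdiff \<mu> f x \<longleftrightarrow> (\<forall>y. f x + g \<bullet> (y - x) + \<mu> / 2 * (norm (y - x))\<^sup>2 \<le> f y)"
proof -
  have shift: "f y - \<mu> / 2 * (norm y)\<^sup>2 - (f x - \<mu> / 2 * (norm x)\<^sup>2 + (g - \<mu> *\<^sub>R x) \<bullet> (y - x))
      = f y - (f x + g \<bullet> (y - x) + \<mu> / 2 * (norm (y - x))\<^sup>2)" for y
    unfolding power2_norm_eq_inner by (simp add: inner_diff_left inner_diff_right inner_commute algebra_simps)
  have "f x - \<mu> / 2 * (norm x)\<^sup>2 + (g - \<mu> *\<^sub>R x) \<bullet> (y - x) \<le> f y - \<mu> / 2 * (norm y)\<^sup>2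
      \<longleftrightarrow> f x + g \<bullet> (y - x) + \<mu> / 2 * (norm (y - x))\<^sup>2 \<le> f y" for y
    using shift[of y] by linarith
  then show ?thesis
    unfolding mem_subdiff_iff_convex_part by simp
qed

lemma subdiff_le:
  "g \<in> subdiff \<mu> f x \<Longrightarrow> f x + g \<bullet> (y - x) + \<mu> / 2 * (norm (y - x))\<^sup>2 \<le> f y"
  by (simp add: mem_subdiff_iff)

lemma convex_on_increment_ge:
  fixes h :: "'a::real_vector \<Rightarrow> real"
  assumes h: "convex_on UNIV h"
    and near: "\<And>t. 0 < t \<Longrightarrow> t \<le> 1 \<Longrightarrow> h x + t * a - t\<^sup>2 * b \<le> h (x + t *\<^sub>R d)"
  shows "h x + a \<le> h (x + d)"
proof (rule field_le_epsilon)
  fix e :: real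
  assume "0 < e"
  define t where "t = min 1 (e / (\<bar>b\<bar> + 1))"
  have t: "0 < t" "t \<le> 1"
    using \<open>0 < e\<close> by (auto simp: t_def)
  have "t * b \<le> t * \<bar>b\<bar>"
    using t by (simp add: mult_left_mono)
  also have "\<dots> \<le> e / (\<bar>b\<bar> + 1) * \<bar>b\<bar>"
    by (intro mult_right_mono) (auto simp: t_def)
  also have "\<dots> \<le> e"
    using \<open>0 < e\<close> by (simp add: field_simps)
  finally have tb: "t * b \<le> e" .
  have "h (x + t *\<^sub>R d) \<le> (1 - t) * h x + t * h (x + d)"
    using convex_onD[OF h, of t x "x + d"] t by (simp add: algebra_simps)
  with near[OF t] have "t * (a - t * b) \<le> t * (h (x + d) - h x)"
    by (simp add: power2_eq_square algebra_simps)
  then have "a - t * b \<le> h (x + d) - h x"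
    using t by simp
  with tb show "h x + a \<le> h (x + d) + e"
    by linarith
qed

lemma FmuL_upper_bound:
  fixes f :: "'a::euclidean_space \<Rightarrow> real"
  assumes f: "f \<in> FmuL \<mu> (ereal l)" and g: "g \<in> subdiff \<mu> f w"
  shows "f z \<le> f w + g \<bullet> (z - w) + l / 2 * (norm (z - w))\<^sup>2"
proof -
  define k where "k = (\<lambda>x. l / 2 * (norm x)\<^sup>2 - f x)"
  have k: "convex_on UNIV k"
    using f by (simp add: FmuL_def k_def)
  define d where "d = z - w"
  (* Midpoint convexity of k between w \<plusminus> t d and the subgradient lower bound for f at w - t d
     bound k (w + t d) from below. *)
  have "k w + (l *\<^sub>R w - g) \<bullet> d \<le> k (w + d)"
  proof (rule convex_on_increment_ge[OF k, where b = "(l - \<mu>) / 2 * (norm d)\<^sup>2"])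
    fix t :: real
    have "k w \<le> k (w + t *\<^sub>R d) / 2 + k (w - t *\<^sub>R d) / 2"
      using convex_onD[OF k, of "1/2" "w + t *\<^sub>R d" "w - t *\<^sub>R d"]
      by (simp add: scaleR_add_right[symmetric] del: scaleR_add_right)
    moreover have "f w - t * (g \<bullet> d) + \<mu> / 2 * (t\<^sup>2 * (norm d)\<^sup>2) \<le> f (w - t *\<^sub>R d)"
      using subdiff_le[OF g, of "w - t *\<^sub>R d"] by (simp add: power_mult_distrib)
    ultimately show "k w + t * ((l *\<^sub>R w - g) \<bullet> d) - t\<^sup>2 * ((l - \<mu>) / 2 * (norm d)\<^sup>2) \<le> k (w + t *\<^sub>R d)"
      unfolding k_def power2_norm_add_scaleR power2_norm_diff_scaleR
      by (simp add: inner_diff_left field_simps)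
  qed
  then have "l / 2 * (norm w)\<^sup>2 - f w + l * (w \<bullet> d) - g \<bullet> d \<le> l / 2 * (norm z)\<^sup>2 - f z"
    by (simp add: k_def d_def inner_diff_left)
  moreover have "(norm z)\<^sup>2 = (norm w)\<^sup>2 + 2 * (w \<bullet> d) + (norm d)\<^sup>2"
    using power2_norm_add_scaleR[of w 1 d] by (simp add: d_def)
  then have "l / 2 * (norm z)\<^sup>2 = l / 2 * (norm w)\<^sup>2 + l * (w \<bullet> d) + l / 2 * (norm d)\<^sup>2"
    by (simp add: ring_distribs)
  ultimately show ?thesis
    unfolding d_def[symmetric] by linarith
qed

lemma inner_minus_quadratic_at_maximizer:
  fixes W :: "'a::real_inner"
  assumes "0 < M"
  shows "W \<bullet> ((1 / M) *\<^sub>R W) - M / 2 * (norm ((1 / M) *\<^sub>R W))\<^sup>2 = (norm W)\<^sup>2 / (2 * M)"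
proof -
  have "W \<bullet> ((1 / M) *\<^sub>R W) = (norm W)\<^sup>2 / M"
    by (simp add: power2_norm_eq_inner)
  moreover have "(norm ((1 / M) *\<^sub>R W))\<^sup>2 = (norm W)\<^sup>2 / M\<^sup>2"
    by (simp add: power_mult_distrib power_divide)
  ultimately show ?thesis
    using assms by (simp add: field_simps power2_eq_square)
qed

lemma FmuL_interpolation:
  fixes f :: "'a::euclidean_space \<Rightarrow> real"
  assumes f: "f \<in> FmuL \<mu> (ereal l)" and "\<mu> < l"
    and gx: "gx \<in> subdiff \<mu> f x" and gy: "gy \<in> subdiff \<mu> f y"
  shows "f x + gx \<bullet> (y - x) + \<mu> / 2 * (norm (y - x))\<^sup>2
           + (norm (gy - gx - \<mu> *\<^sub>R (y - x)))\<^sup>2 / (2 * (l - \<mu>)) \<le> f y"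
proof -
  define E where "E = y - x"
  define W where "W = gy - gx - \<mu> *\<^sub>R E"
  define r where "r = (1 / (l - \<mu>)) *\<^sub>R W"
  have "y - r - x = E - r"
    by (simp add: E_def)
  then have "f x + gx \<bullet> (E - r) + \<mu> / 2 * (norm (E - r))\<^sup>2 \<le> f (y - r)"
    using subdiff_le[OF gx, of "y - r"] by (simp only:)
  also have "\<dots> \<le> f y - gy \<bullet> r + l / 2 * (norm r)\<^sup>2"
    using FmuL_upper_bound[OF f gy, of "y - r"] by simp
  finally have bound: "f x + gx \<bullet> (E - r) + \<mu> / 2 * (norm (E - r))\<^sup>2
      \<le> f y - gy \<bullet> r + l / 2 * (norm r)\<^sup>2" .
  have "(norm (E - r))\<^sup>2 = (norm E)\<^sup>2 - 2 * (E \<bullet> r) + (norm r)\<^sup>2"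
    using power2_norm_diff_scaleR[of E 1 r] by simp
  then have "\<mu> / 2 * (norm (E - r))\<^sup>2 = \<mu> / 2 * (norm E)\<^sup>2 - \<mu> * (E \<bullet> r) + \<mu> / 2 * (norm r)\<^sup>2"
    by (simp only:) (simp add: algebra_simps)
  moreover have "W \<bullet> r = gy \<bullet> r - gx \<bullet> r - \<mu> * (E \<bullet> r)"
    by (simp add: W_def inner_diff_left)
  moreover have "gx \<bullet> (E - r) = gx \<bullet> E - gx \<bullet> r"
    by (rule inner_diff_right)
  moreover have "(l - \<mu>) / 2 * (norm r)\<^sup>2 = l / 2 * (norm r)\<^sup>2 - \<mu> / 2 * (norm r)\<^sup>2"
    by (simp add: left_diff_distrib)
  ultimately have "f x + gx \<bullet> E + \<mu> / 2 * (norm E)\<^sup>2 + W \<bullet> r - (l - \<mu>) / 2 * (norm r)\<^sup>2 \<le> f y"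
    using bound by linarith
  moreover have "W \<bullet> r - (l - \<mu>) / 2 * (norm r)\<^sup>2 = (norm W)\<^sup>2 / (2 * (l - \<mu>))"
    using inner_minus_quadratic_at_maximizer[of "l - \<mu>" W] \<open>\<mu> < l\<close> by (simp add: r_def)
  ultimately show ?thesis
    by (simp add: W_def E_def)
qed

lemma subdiff_of_argmin:
  fixes f :: "'a::euclidean_space \<Rightarrow> real"
  assumes f: "f \<in> FmuL \<mu> L" and argmin: "\<And>w. f x - g \<bullet> x \<le> f w - g \<bullet> w"
  shows "g \<in> subdiff \<mu> f x"
  unfolding mem_subdiff_iff_convex_part
proof
  fix y
  define h where "h = (\<lambda>z. f z - \<mu> / 2 * (norm z)\<^sup>2)"
  have h: "convex_on UNIV h"
    using f by (simp add: FmuL_def h_def)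
  have "h x + (g - \<mu> *\<^sub>R x) \<bullet> (y - x) \<le> h (x + (y - x))"
  proof (rule convex_on_increment_ge[OF h, where b = "\<mu> / 2 * (norm (y - x))\<^sup>2"])
    fix t :: real
    show "h x + t * ((g - \<mu> *\<^sub>R x) \<bullet> (y - x)) - t\<^sup>2 * (\<mu> / 2 * (norm (y - x))\<^sup>2) \<le> h (x + t *\<^sub>R (y - x))"
      using argmin[of "x + t *\<^sub>R (y - x)"] unfolding h_def power2_norm_add_scaleR
      by (simp add: inner_add_right inner_diff_left algebra_simps)
  qed
  then show "f x - \<mu> / 2 * (norm x)\<^sup>2 + (g - \<mu> *\<^sub>R x) \<bullet> (y - x) \<le> f y - \<mu> / 2 * (norm y)\<^sup>2"
    by (simp add: h_def)
qed

section \<open>Admissible rates for one DCA step\<close>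

(* Gram-matrix form of the one-step certificate of dca_decrease_smooth_part, where the smooth part
   has curvature bounds m < l and the other part lower curvature n: e, s, h stand for |E|^2, <H, E>,
   |H|^2 with E = p - q and H = b - g, so the premise says |E - \<omega> H|^2 \<ge> 0 for all \<omega>. The
   right-hand side is what the lower bound for the other part plus 1 + \<beta> and \<beta> times the two
   interpolation inequalities of the smooth part yield. *)
definition admissible_rate :: "real \<Rightarrow> real \<Rightarrow> real \<Rightarrow> real \<Rightarrow> bool" where
  "admissible_rate m l n \<rho> \<longleftrightarrow> (\<exists>\<beta>\<ge>0. \<forall>e s h. (\<forall>\<omega>. 0 \<le> e - 2 * \<omega> * s + \<omega>\<^sup>2 * h) \<longrightarrow>
      \<rho> / 2 * h \<le> n / 2 * e + (1 + 2 * \<beta>) * (m / 2 * e + (h - 2 * m * s + m\<^sup>2 * e) / (2 * (l - m)))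
                   - \<beta> * s)"

lemma admissible_rateI:
  assumes "0 \<le> \<beta>" and "0 \<le> \<kappa>"
    and sos: "\<And>e s h. n / 2 * e + (1 + 2 * \<beta>) * (m / 2 * e + (h - 2 * m * s + m\<^sup>2 * e) / (2 * (l - m)))
                 - \<beta> * s - \<rho> / 2 * h = \<kappa> * (e - 2 * \<omega> * s + \<omega>\<^sup>2 * h)"
  shows "admissible_rate m l n \<rho>"
  unfolding admissible_rate_def
proof (intro exI conjI allI impI)
  fix e s h :: real
  assume "\<forall>\<omega>. 0 \<le> e - 2 * \<omega> * s + \<omega>\<^sup>2 * h"
  then have "0 \<le> \<kappa> * (e - 2 * \<omega> * s + \<omega>\<^sup>2 * h)"
    using \<open>0 \<le> \<kappa>\<close> by simp
  then show "\<rho> / 2 * h \<le> n / 2 * e + (1 + 2 * \<beta>) * (m / 2 * e + (h - 2 * m * s + m\<^sup>2 * e) / (2 * (l - m)))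
                 - \<beta> * s"
    using sos[where e = e and s = s and h = h] by linarith
qed (fact \<open>0 \<le> \<beta>\<close>)

lemma admissible_rate_curvature_sum_nonneg:
  assumes "m < l" "0 < l" "0 \<le> n" "0 \<le> m * l + n * l + m * n"
  shows "admissible_rate m l n ((l + n) / l\<^sup>2)"
  by (rule admissible_rateI[where \<beta> = "n / l" and \<kappa> = "(m * l + n * l + m * n) / (2 * (l - m))"
        and \<omega> = "1 / l"])
    (use assms in \<open>simp_all add: field_simps power2_eq_square\<close>)

lemma admissible_rate_curvature_sum_pos:
  assumes "m < l" "0 < m + n"
  shows "admissible_rate m l n ((m + n) / ((m + n) * l - m * n))"
proof -
  define T where "T = (m + n) * l - m * n"
  have "0 < (m + n) * (l - m) + m\<^sup>2"
    using assms by (simp add: add_pos_nonneg)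
  then have "0 < T"
    by (simp add: T_def power2_eq_square algebra_simps)
  show ?thesis
    unfolding T_def[symmetric]
    by (rule admissible_rateI[where \<beta> = 0 and \<kappa> = "T / (2 * (l - m))" and \<omega> = "m / T"])
      (use \<open>0 < T\<close> assms in \<open>simp_all add: field_simps power2_eq_square, simp add: T_def algebra_simps\<close>)
qed

lemma admissible_rate_weakly_convex:
  assumes "m < l" "m < 0" "0 < m + n" "m * l + n * l + m * n \<le> 0"
  shows "admissible_rate m l n ((m + n) / m\<^sup>2)"
  by (rule admissible_rateI[where \<beta> = "- (m + n) / m" and \<kappa> = "- (m * l + n * l + m * n) / (2 * (l - m))"
        and \<omega> = "1 / m"])
    (use assms in \<open>simp_all add: field_simps power2_eq_square divide_nonpos_neg\<close>)

lemma dca_decrease_smooth_part: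
  fixes \<phi> \<psi> :: "'a::euclidean_space \<Rightarrow> real"
  assumes \<phi>: "\<phi> \<in> FmuL m (ereal l)" and "m < l" and rate: "admissible_rate m l n \<rho>"
    and g\<psi>: "g \<in> subdiff n \<psi> p" and b\<phi>: "b \<in> subdiff m \<phi> p" and g\<phi>: "g \<in> subdiff m \<phi> q"
  shows "\<rho> / 2 * (norm (b - g))\<^sup>2 \<le> (\<phi> p - \<psi> p) - (\<phi> q - \<psi> q)"
proof -
  obtain \<beta> where "0 \<le> \<beta>" and cert: "\<And>e s h. \<forall>\<omega>. 0 \<le> e - 2 * \<omega> * s + \<omega>\<^sup>2 * h \<Longrightarrow>
      \<rho> / 2 * h \<le> n / 2 * e + (1 + 2 * \<beta>) * (m / 2 * e + (h - 2 * m * s + m\<^sup>2 * e) / (2 * (l - m)))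
                   - \<beta> * s"
    using rate unfolding admissible_rate_def by blast
  define E where "E = p - q"
  define H where "H = b - g"
  define R where "R = m / 2 * (norm E)\<^sup>2 + (norm (H - m *\<^sub>R E))\<^sup>2 / (2 * (l - m))"
  have "\<psi> p + g \<bullet> (q - p) + n / 2 * (norm (q - p))\<^sup>2 \<le> \<psi> q"
    by (rule subdiff_le[OF g\<psi>])
  then have lower_\<psi>: "\<psi> p - g \<bullet> E + n / 2 * (norm E)\<^sup>2 \<le> \<psi> q"
    by (simp add: E_def norm_minus_commute inner_diff_right)
  have "\<phi> q + g \<bullet> (p - q) + m / 2 * (norm (p - q))\<^sup>2
      + (norm (b - g - m *\<^sub>R (p - q)))\<^sup>2 / (2 * (l - m)) \<le> \<phi> p"
    by (rule FmuL_interpolation[OF \<phi> \<open>m < l\<close> g\<phi> b\<phi>])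
  then have up: "\<phi> q + g \<bullet> E + R \<le> \<phi> p"
    by (simp add: E_def H_def R_def)
  have "\<phi> p + b \<bullet> (q - p) + m / 2 * (norm (q - p))\<^sup>2
      + (norm (g - b - m *\<^sub>R (q - p)))\<^sup>2 / (2 * (l - m)) \<le> \<phi> q"
    by (rule FmuL_interpolation[OF \<phi> \<open>m < l\<close> b\<phi> g\<phi>])
  moreover have "g - b - m *\<^sub>R (q - p) = - (H - m *\<^sub>R E)"
    by (simp add: E_def H_def algebra_simps)
  moreover have "b \<bullet> (q - p) = - (g \<bullet> E) - H \<bullet> E"
    by (simp add: E_def H_def inner_diff_left inner_diff_right algebra_simps)
  ultimately have down: "\<phi> p - g \<bullet> E - H \<bullet> E + R \<le> \<phi> q"
    by (simp add: E_def R_def norm_minus_commute)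
  have "\<forall>\<omega>. 0 \<le> (norm E)\<^sup>2 - 2 * \<omega> * (H \<bullet> E) + \<omega>\<^sup>2 * (norm H)\<^sup>2"
    using power2_norm_diff_scaleR[of E _ H] by (metis inner_commute zero_le_power2)
  from cert[OF this] have "\<rho> / 2 * (norm H)\<^sup>2 \<le> n / 2 * (norm E)\<^sup>2 + (1 + 2 * \<beta>) * R - \<beta> * (H \<bullet> E)"
    using power2_norm_diff_scaleR[of H m E] by (simp add: R_def inner_commute)
  moreover have "(1 + \<beta>) * (\<phi> q + g \<bullet> E + R) \<le> (1 + \<beta>) * \<phi> p"
    using up \<open>0 \<le> \<beta>\<close> by (intro mult_left_mono) auto
  moreover have "\<beta> * (\<phi> p - g \<bullet> E - H \<bullet> E + R) \<le> \<beta> * \<phi> q"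
    using down \<open>0 \<le> \<beta>\<close> by (intro mult_left_mono) auto
  ultimately show ?thesis
    using lower_\<psi> unfolding H_def[symmetric] by (simp add: algebra_simps)
qed

section \<open>The parameter domains\<close>

lemma curvature_sum_nonneg_of_ereal:
  assumes "0 < l" and "0 \<le> \<mu>1" and mus: "0 < \<mu>1 + \<mu>2 \<or> \<mu>1 = 0 \<and> \<mu>2 = 0"
    and ereal: "0 \<le> ereal \<mu>2 * (inverse (ereal \<mu>1) + inverse (ereal \<mu>2) + inverse (ereal l))"
  shows "0 \<le> \<mu>1 * l + \<mu>2 * l + \<mu>1 * \<mu>2"
proof (cases "\<mu>1 = 0 \<or> \<mu>2 = 0")
  case True
  then show ?thesis
    using assms by auto
next
  case False
  then have "0 \<le> \<mu>2 * (inverse \<mu>1 + inverse \<mu>2 + inverse l)"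
    using ereal \<open>0 < l\<close> by simp
  then have "0 \<le> (\<mu>1 * l) * (\<mu>2 * (inverse \<mu>1 + inverse \<mu>2 + inverse l))"
    using assms by simp
  also have "\<dots> = \<mu>1 * l + \<mu>2 * l + \<mu>1 * \<mu>2"
    using False \<open>0 < l\<close> by (simp add: field_simps)
  finally show ?thesis .
qed

lemma curvature_sum_nonpos_of_ereal:
  assumes "0 < - \<mu>2" and "- \<mu>2 < \<mu>1"
    and ereal: "0 < ereal (inverse \<mu>1) + ereal (inverse \<mu>2) + inverse (ereal l)"
  shows "\<mu>1 * l + \<mu>2 * l + \<mu>1 * \<mu>2 \<le> 0"
proof (cases "l = 0")
  case True
  then show ?thesis
    using assms by (simp add: mult_pos_neg less_imp_le)
next
  case False
  have "inverse \<mu>1 < inverse (- \<mu>2)"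
    using assms by (intro less_imp_inverse_less) auto
  then have "inverse \<mu>1 + inverse \<mu>2 < 0"
    by (simp add: inverse_minus_eq)
  moreover have pos: "0 < inverse \<mu>1 + inverse \<mu>2 + inverse l"
    using ereal False by simp
  ultimately have "0 < inverse l"
    by linarith
  then have "0 < l"
    by simp
  then have "0 < (\<mu>1 * l * (- \<mu>2)) * (inverse \<mu>1 + inverse \<mu>2 + inverse l)"
    using pos assms by (intro mult_pos_pos) auto
  also have "\<dots> = - (\<mu>1 * l + \<mu>2 * l + \<mu>1 * \<mu>2)"
    using assms \<open>0 < l\<close> by (simp add: field_simps)
  finally show ?thesis
    by simp
qed

lemma dca_rate_a:
  assumes "\<mu>2 < l" "0 \<le> \<mu>1" "\<mu>1 \<le> l" and mus: "0 < \<mu>1 + \<mu>2 \<or> \<mu>1 = 0 \<and> \<mu>2 = 0"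
    and ereal: "0 \<le> ereal \<mu>2 * (inverse (ereal \<mu>1) + inverse (ereal \<mu>2) + inverse (ereal l))"
  shows "0 < (l + \<mu>1) / l\<^sup>2 \<and> admissible_rate \<mu>2 l \<mu>1 ((l + \<mu>1) / l\<^sup>2)"
proof -
  have "0 < l"
    using assms by auto
  then have "0 \<le> \<mu>2 * l + \<mu>1 * l + \<mu>2 * \<mu>1"
    using curvature_sum_nonneg_of_ereal[OF _ \<open>0 \<le> \<mu>1\<close> mus ereal] by (simp add: algebra_simps)
  then show ?thesis
    using \<open>0 < l\<close> assms by (simp add: admissible_rate_curvature_sum_nonneg)
qed

lemma dca_rate_b:
  assumes "\<mu>1 < l" "0 \<le> \<mu>1" "0 \<le> \<mu>2"
  shows "0 < (l + \<mu>2) / l\<^sup>2 \<and> admissible_rate \<mu>1 l \<mu>2 ((l + \<mu>2) / l\<^sup>2)"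
  using assms by (simp add: admissible_rate_curvature_sum_nonneg)

lemma dca_rate_c:
  assumes "\<mu>1 < l" "- \<mu>2 < \<mu>1" "0 < - \<mu>2"
  defines "\<rho> \<equiv> inverse l * (inverse \<mu>1 + inverse \<mu>2) / (inverse \<mu>1 + inverse \<mu>2 - inverse l)"
  shows "0 < \<rho> \<and> admissible_rate \<mu>1 l \<mu>2 \<rho>"
proof -
  have "0 < l"
    using assms by simp
  have "0 < (\<mu>1 + \<mu>2) * l" "\<mu>1 * \<mu>2 < 0"
    using \<open>0 < l\<close> assms by (simp_all add: mult_pos_neg)
  then have T: "0 < (\<mu>1 + \<mu>2) * l - \<mu>1 * \<mu>2"
    by linarith
  have P: "\<mu>1 * \<mu>2 * l \<noteq> 0"
    using \<open>0 < l\<close> assms by simp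
  then have "inverse l * (inverse \<mu>1 + inverse \<mu>2) = (\<mu>1 + \<mu>2) / (\<mu>1 * \<mu>2 * l)"
    and "inverse \<mu>1 + inverse \<mu>2 - inverse l = ((\<mu>1 + \<mu>2) * l - \<mu>1 * \<mu>2) / (\<mu>1 * \<mu>2 * l)"
    by (simp_all add: field_simps)
  with P T have "\<rho> = (\<mu>1 + \<mu>2) / ((\<mu>1 + \<mu>2) * l - \<mu>1 * \<mu>2)"
    by (simp add: \<rho>_def)
  then show ?thesis
    using admissible_rate_curvature_sum_pos[of \<mu>1 l \<mu>2] T assms by simp
qed

lemma dca_rate_d:
  assumes "\<mu>2 < l" "- \<mu>2 < \<mu>1" "0 < - \<mu>2"
    and "0 < ereal (inverse \<mu>1) + ereal (inverse \<mu>2) + inverse (ereal l)"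
  shows "0 < (\<mu>1 + \<mu>2) / \<mu>2\<^sup>2 \<and> admissible_rate \<mu>2 l \<mu>1 ((\<mu>1 + \<mu>2) / \<mu>2\<^sup>2)"
proof -
  have "\<mu>2 * l + \<mu>1 * l + \<mu>2 * \<mu>1 \<le> 0"
    using curvature_sum_nonpos_of_ereal[of \<mu>2 \<mu>1 l] assms by (simp add: algebra_simps)
  then show ?thesis
    using admissible_rate_weakly_convex[of \<mu>2 l \<mu>1] assms by (simp add: add.commute)
qed

lemma dca_domain_cases:
  assumes L1: "ereal \<mu>1 < L1" and L2: "ereal \<mu>2 < L2" and "0 \<le> \<mu>1"
    and one_smooth: "(L1 = \<infinity>) \<noteq> (L2 = \<infinity>)"
    and mus: "0 < \<mu>1 + \<mu>2 \<or> \<mu>1 = 0 \<and> \<mu>2 = 0"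
    and dom: "dca_domain \<mu>1 \<mu>2 L1 L2 \<sigma> \<sigma>p"
  obtains (f2_smooth) l where "L2 = ereal l" "\<mu>2 < l" "\<sigma> = 0" "0 < \<sigma>p" "admissible_rate \<mu>2 l \<mu>1 \<sigma>p"
    | (f1_smooth) l where "L1 = ereal l" "\<mu>1 < l" "\<sigma>p = 0" "0 < \<sigma>" "admissible_rate \<mu>1 l \<mu>2 \<sigma>"
  using dom unfolding dca_domain_def
proof (elim disjE conjE)
  assume "L2 < \<infinity>" "ereal \<mu>1 \<le> L2" "\<sigma> = 0"
    "0 \<le> ereal \<mu>2 * (inverse (ereal \<mu>1) + inverse (ereal \<mu>2) + inverse L2)"
    "\<sigma>p = (real_of_ereal L2 + \<mu>1) / (real_of_ereal L2)\<^sup>2"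
  moreover obtain l where "L2 = ereal l"
    using L2 \<open>L2 < \<infinity>\<close> by (cases L2) auto
  ultimately show thesis
    using f2_smooth dca_rate_a[of \<mu>2 l \<mu>1] L2 \<open>0 \<le> \<mu>1\<close> mus by auto
next
  assume "L1 < \<infinity>" "0 \<le> \<mu>2" "\<sigma>p = 0"
    "\<sigma> = (real_of_ereal L1 + \<mu>2) / (real_of_ereal L1)\<^sup>2"
  moreover obtain l where "L1 = ereal l"
    using L1 \<open>L1 < \<infinity>\<close> by (cases L1) auto
  ultimately show thesis
    using f1_smooth dca_rate_b[of \<mu>1 l \<mu>2] L1 \<open>0 \<le> \<mu>1\<close> by auto
next
  assume "L2 = \<infinity>" "- \<mu>2 < \<mu>1" "0 < - \<mu>2" "\<sigma>p = 0"
    "\<sigma> = inverse (real_of_ereal L1) * (inverse \<mu>1 + inverse \<mu>2)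
         / (inverse \<mu>1 + inverse \<mu>2 - inverse (real_of_ereal L1))"
  moreover obtain l where "L1 = ereal l"
    using L1 one_smooth \<open>L2 = \<infinity>\<close> by (cases L1) auto
  ultimately show thesis
    using f1_smooth dca_rate_c[of \<mu>1 l \<mu>2] L1 by auto
next
  assume "L1 = \<infinity>" "- \<mu>2 < \<mu>1" "0 < - \<mu>2" "\<sigma> = 0"
    "0 < ereal (inverse \<mu>1) + ereal (inverse \<mu>2) + inverse L2" "\<sigma>p = (\<mu>1 + \<mu>2) / \<mu>2\<^sup>2"
  moreover obtain l where "L2 = ereal l"
    using L2 one_smooth \<open>L1 = \<infinity>\<close> by (cases L2) auto
  ultimately show thesis
    using f2_smooth dca_rate_d[of \<mu>2 l \<mu>1] L2 by auto
qed

section \<open>The DCA iteration\<close>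

lemma dca_step_decrease:
  fixes f1 f2 :: "'a::euclidean_space \<Rightarrow> real"
  assumes L1: "ereal \<mu>1 < L1" and L2: "ereal \<mu>2 < L2"
    and f1: "f1 \<in> FmuL \<mu>1 L1" and f2: "f2 \<in> FmuL \<mu>2 L2" and "0 \<le> \<mu>1"
    and one_smooth: "(L1 = \<infinity>) \<noteq> (L2 = \<infinity>)"
    and mus: "0 < \<mu>1 + \<mu>2 \<or> \<mu>1 = 0 \<and> \<mu>2 = 0"
    and dom: "dca_domain \<mu>1 \<mu>2 L1 L2 \<sigma> \<sigma>p"
    and a: "a \<in> subdiff \<mu>1 f1 x" and g1: "g \<in> subdiff \<mu>1 f1 y" and g2: "g \<in> subdiff \<mu>2 f2 x"
    and b: "b \<in> subdiff \<mu>2 f2 y"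
  shows "\<sigma> / 2 * (norm (a - g))\<^sup>2 + \<sigma>p / 2 * (norm (g - b))\<^sup>2 \<le> (f1 x - f2 x) - (f1 y - f2 y)"
proof (rule dca_domain_cases[OF L1 L2 \<open>0 \<le> \<mu>1\<close> one_smooth mus dom])
  fix l
  assume "L2 = ereal l" "\<mu>2 < l" "\<sigma> = 0" "admissible_rate \<mu>2 l \<mu>1 \<sigma>p"
  then have "\<sigma>p / 2 * (norm (b - g))\<^sup>2 \<le> (f2 y - f1 y) - (f2 x - f1 x)"
    using f2 by (intro dca_decrease_smooth_part[OF _ _ _ g1 b g2]) simp_all
  then show ?thesis
    using \<open>\<sigma> = 0\<close> by (simp add: norm_minus_commute)
next
  fix l
  assume "L1 = ereal l" "\<mu>1 < l" "\<sigma>p = 0" "admissible_rate \<mu>1 l \<mu>2 \<sigma>"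
  then have "\<sigma> / 2 * (norm (a - g))\<^sup>2 \<le> (f1 x - f2 x) - (f1 y - f2 y)"
    using f1 by (intro dca_decrease_smooth_part[OF _ _ _ g2 a g1]) simp_all
  then show ?thesis
    using \<open>\<sigma>p = 0\<close> by simp
qed

lemma telescoping_min_bound:
  fixes a F :: "nat \<Rightarrow> real"
  assumes "0 \<le> \<sigma>" and "0 \<le> \<sigma>p"
    and step: "\<And>k. k < N \<Longrightarrow> \<sigma> * a k + \<sigma>p * a (Suc k) \<le> F k - F (Suc k)"
  shows "(\<sigma> + \<sigma>p) * real N * (MIN k\<in>{0..N}. a k) \<le> F 0 - F N"
proof -
  let ?m = "MIN k\<in>{0..N}. a k"
  have "(\<sigma> + \<sigma>p) * ?m \<le> F k - F (Suc k)" if "k < N" for k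
  proof -
    have "?m \<le> a k" "?m \<le> a (Suc k)"
      using that by (auto intro: Min_le)
    then have "\<sigma> * ?m + \<sigma>p * ?m \<le> \<sigma> * a k + \<sigma>p * a (Suc k)"
      using assms by (intro add_mono mult_left_mono) auto
    then show ?thesis
      using step[OF that] by (simp add: distrib_right)
  qed
  then have "(\<Sum>k<N. (\<sigma> + \<sigma>p) * ?m) \<le> (\<Sum>k<N. F k - F (Suc k))"
    by (intro sum_mono) simp
  then show ?thesis
    by (simp add: sum_lessThan_telescope' mult.commute mult.left_commute)
qed

lemma real_of_ereal_inverse_diff_nonneg:
  "ereal \<mu> < L \<Longrightarrow> 0 \<le> real_of_ereal (inverse (L - ereal \<mu>))"
  by (cases L) auto

lemma scaled_gap_le_suboptimality:
  fixes f1 f2 :: "'a::euclidean_space \<Rightarrow> real"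
  assumes f1: "f1 \<in> FmuL \<mu>1 L1" and L1: "ereal \<mu>2 < L1"
    and g1: "g1 \<in> subdiff \<mu>1 f1 x" and g2: "g2 \<in> subdiff \<mu>2 f2 x"
    and bdd: "bdd_below (range (\<lambda>w. f1 w - f2 w))"
  shows "real_of_ereal (inverse (L1 - ereal \<mu>2)) * (1 / 2 * (norm (g1 - g2))\<^sup>2)
           \<le> (f1 x - f2 x) - (INF w. f1 w - f2 w)"
proof -
  have INF_le: "(INF w. f1 w - f2 w) \<le> f1 w - f2 w" for w
    using bdd by (rule cINF_lower) simp
  show ?thesis
  proof (cases L1)
    case (real l)
    (* a gradient step of length c on f1 - f2 *)
    define c where "c = 1 / (l - \<mu>2)"
    define D where "D = g1 - g2"
    have lc: "(l - \<mu>2) * c = 1"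
      using L1 real by (simp add: c_def)
    have "f1 (x - c *\<^sub>R D) \<le> f1 x + g1 \<bullet> (- c *\<^sub>R D) + l / 2 * (norm (c *\<^sub>R D))\<^sup>2"
      using FmuL_upper_bound[OF f1[unfolded real] g1, of "x - c *\<^sub>R D"] by simp
    moreover have "f2 x + g2 \<bullet> (- c *\<^sub>R D) + \<mu>2 / 2 * (norm (c *\<^sub>R D))\<^sup>2 \<le> f2 (x - c *\<^sub>R D)"
      using subdiff_le[OF g2, of "x - c *\<^sub>R D"] by simp
    moreover have "(g1 - g2) \<bullet> (- c *\<^sub>R D) = - c * (norm D)\<^sup>2"
      by (simp add: D_def power2_norm_eq_inner)
    moreover have "(l - \<mu>2) / 2 * (norm (c *\<^sub>R D))\<^sup>2 = ((l - \<mu>2) * c) * c * (norm D)\<^sup>2 / 2"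
      by (simp add: power_mult_distrib power2_eq_square)
    ultimately have "f1 (x - c *\<^sub>R D) - f2 (x - c *\<^sub>R D) \<le> (f1 x - f2 x) - c * (1 / 2 * (norm D)\<^sup>2)"
      unfolding lc by (simp add: inner_diff_left algebra_simps)
    moreover have "real_of_ereal (inverse (L1 - ereal \<mu>2)) = c"
      by (simp add: real c_def inverse_eq_divide)
    ultimately show ?thesis
      using INF_le[of "x - c *\<^sub>R D"] by (simp add: D_def)
  next
    case PInf
    then show ?thesis
      using INF_le[of x] by simp
  next
    case MInf
    then show ?thesis
      using L1 by simp
  qed
qed

theorem corollary2:
  fixes f1 f2 :: "'a::euclidean_space \<Rightarrow> real"
    and \<mu>1 \<mu>2 :: real and L1 L2 :: ereal
    and N :: nat and x g1 g2 :: "nat \<Rightarrow> 'a"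
    and \<sigma> \<sigma>p :: real
  assumes L1: "ereal \<mu>1 < L1" and L2: "ereal \<mu>2 < L2"
    and f1: "f1 \<in> FmuL \<mu>1 L1" and f2: "f2 \<in> FmuL \<mu>2 L2"
    and mu1: "\<mu>1 \<ge> 0"
    and bdd: "bdd_below (range (\<lambda>w. f1 w - f2 w))"
    and dom_ne: "dom_subdiff \<mu>1 f1 \<noteq> {}"
    and dom_sub: "dom_subdiff \<mu>1 f1 \<subseteq> dom_subdiff \<mu>2 f2"
    and range_sub: "range_subdiff \<mu>2 f2 \<subseteq> range_subdiff \<mu>1 f1"
    and one_smooth: "(L1 = \<infinity>) \<noteq> (L2 = \<infinity>)"
    and mus: "\<mu>1 + \<mu>2 > 0 \<or> (\<mu>1 = 0 \<and> \<mu>2 = 0)"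
    and N: "N \<ge> 1"
    and g2: "\<And>k. k < N \<Longrightarrow> g2 k \<in> subdiff \<mu>2 f2 (x k)"
    and step: "\<And>k w. k < N \<Longrightarrow> f1 (x (Suc k)) - g2 k \<bullet> x (Suc k) \<le> f1 w - g2 k \<bullet> w"
    and g1: "\<And>k. k < N \<Longrightarrow> g1 (Suc k) = g2 k"
    and g1_0: "g1 0 \<in> subdiff \<mu>1 f1 (x 0)"
    and g2_N: "g2 N \<in> subdiff \<mu>2 f2 (x N)"
    and dom: "dca_domain \<mu>1 \<mu>2 L1 L2 \<sigma> \<sigma>p"
  shows "(MIN k\<in>{0..N}. 1/2 * (norm (g1 k - g2 k))\<^sup>2)
           \<le> ((f1 (x 0) - f2 (x 0)) - (f1 (x N) - f2 (x N))) / ((\<sigma> + \<sigma>p) * real N)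
       \<and> (L1 > ereal \<mu>2 \<longrightarrow>
           (MIN k\<in>{0..N}. 1/2 * (norm (g1 k - g2 k))\<^sup>2)
             \<le> ((f1 (x 0) - f2 (x 0)) - (INF w. f1 w - f2 w))
                 / ((\<sigma> + \<sigma>p) * real N + real_of_ereal (inverse (L1 - ereal \<mu>2))))"
proof -
  (* The hypotheses dom_ne, dom_sub and range_sub only guarantee that the iteration can be run;
     here the iterates are given. *)
  have sub1: "g1 k \<in> subdiff \<mu>1 f1 (x k)" if "k \<le> N" for k
  proof (cases k)
    case (Suc j)
    then show ?thesis
      using that g1 subdiff_of_argmin[OF f1 step] by simp
  qed (use g1_0 in simp)
  have sub2: "g2 k \<in> subdiff \<mu>2 f2 (x k)" if "k \<le> N" for k
    using that g2 g2_N by (cases "k = N") auto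
  have rates: "0 \<le> \<sigma>" "0 \<le> \<sigma>p" "0 < \<sigma> + \<sigma>p"
    by (rule dca_domain_cases[OF L1 L2 mu1 one_smooth mus dom]; simp)+
  let ?gap = "\<lambda>k. 1/2 * (norm (g1 k - g2 k))\<^sup>2"
  let ?m = "MIN k\<in>{0..N}. ?gap k"
  have descent: "(\<sigma> + \<sigma>p) * real N * ?m \<le> (f1 (x 0) - f2 (x 0)) - (f1 (x N) - f2 (x N))"
  proof (rule telescoping_min_bound[OF rates(1,2)])
    fix k
    assume "k < N"
    then show "\<sigma> * ?gap k + \<sigma>p * ?gap (Suc k)
        \<le> (f1 (x k) - f2 (x k)) - (f1 (x (Suc k)) - f2 (x (Suc k)))"
      using dca_step_decrease[OF L1 L2 f1 f2 mu1 one_smooth mus dom, of "g1 k" "x k" "g2 k" "x (Suc k)"]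
        sub1[of k] sub1[of "Suc k"] sub2[of k] sub2[of "Suc k"] g1[of k] by simp
  qed
  have pos: "0 < (\<sigma> + \<sigma>p) * real N"
    using rates N by simp
  let ?c = "real_of_ereal (inverse (L1 - ereal \<mu>2))"
  show ?thesis
  proof (intro conjI impI)
    show "?m \<le> (f1 (x 0) - f2 (x 0) - (f1 (x N) - f2 (x N))) / ((\<sigma> + \<sigma>p) * real N)"
      using descent pos by (simp add: pos_le_divide_eq mult.commute)
  next
    assume L1_\<mu>2: "ereal \<mu>2 < L1"
    have "?m \<le> ?gap N"
      by (rule Min_le) auto
    then have "?c * ?m \<le> ?c * ?gap N"
      using real_of_ereal_inverse_diff_nonneg[OF L1_\<mu>2] by (rule mult_left_mono)
    also have "\<dots> \<le> (f1 (x N) - f2 (x N)) - (INF w. f1 w - f2 w)"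
      using scaled_gap_le_suboptimality[OF f1 L1_\<mu>2 sub1[of N] sub2[of N] bdd] by simp
    finally have "?m * ((\<sigma> + \<sigma>p) * real N + ?c) \<le> f1 (x 0) - f2 (x 0) - (INF w. f1 w - f2 w)"
      using descent by (simp only: ring_distribs mult.commute)
    moreover have "0 < (\<sigma> + \<sigma>p) * real N + ?c"
      using pos real_of_ereal_inverse_diff_nonneg[OF L1_\<mu>2] by (rule add_pos_nonneg)
    ultimately show "?m \<le> (f1 (x 0) - f2 (x 0) - (INF w. f1 w - f2 w)) / ((\<sigma> + \<sigma>p) * real N + ?c)"
      by (simp only: pos_le_divide_eq)
  qed
qed

end
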